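(* Let $m,n\ge 0$ and let $A:\Sigma^m\to\Sigma^n$, $B:\Sigma\to\Sigma^n$, $C:\Sigma^m\to\Sigma$ be $\mathsf{R}$-module homomorphisms, and let $d\in\mathsf{R}$ be either $0$ or of positive order, i.e. $d=xf$ for some $f\in\mathsf{R}$. Define $F:\Sigma^m\times\Sigma\to\Sigma^n\times\Sigma$ by $F(\alpha,\sigma)=(A(\alpha)+B(\sigma),\,C(\alpha)+\sigma d)$. Let $I$ be any ideal of $\mathsf{R}$, and suppose $F(\alpha,\sigma)=(\beta,\tau)$ for some $\alpha,\beta,\sigma,\tau$ with $\sigma-\tau\in I$. Then there exist unique $\beta'\in\Sigma^n$ and $\sigma'\in\Sigma$ such that $F(\alpha,\sigma')=(\beta',\sigma')$, and for these one has $\sigma'-\sigma\in I$.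
   Context: $\mathsf{R}=\mathbb{R}[[x]]$ is the ring of formal power series with real coefficients. $\Sigma$ is the set of streams of reals (functions $\mathbb{N}\to\mathbb{R}$), identified with $\mathsf{R}$ via $\sigma\mapsto\sum_i\sigma_i x^i$; $\Sigma^k$ is the $k$-fold cartesian product ($\Sigma^0$ a singleton), an $\mathsf{R}$-module with $\mathsf{R}$ acting componentwise by multiplication. The order of a nonzero $f\in\mathsf{R}$ is the least $i$ with $f_i\neq 0$. *)

theory Defs
  imports "HOL-Computational_Algebra.Formal_Power_Series"
begin

text \<open>R = real fps. The module Sigma^k is represented by functions nat => real fps
  that vanish at every index >= k (so Sigma^0 is the singleton containing the zero function).\<close>

definition svec :: "nat \<Rightarrow> (nat \<Rightarrow> real fps) set" where
  "svec k = {v. \<forall>i\<ge>k. v i = 0}"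

definition hom_vv :: "nat \<Rightarrow> nat \<Rightarrow> ((nat \<Rightarrow> real fps) \<Rightarrow> (nat \<Rightarrow> real fps)) \<Rightarrow> bool" where
  "hom_vv m n A \<longleftrightarrow>
     (\<forall>v\<in>svec m. A v \<in> svec n) \<and>
     (\<forall>u\<in>svec m. \<forall>v\<in>svec m. A (\<lambda>i. u i + v i) = (\<lambda>i. A u i + A v i)) \<and>
     (\<forall>c. \<forall>v\<in>svec m. A (\<lambda>i. c * v i) = (\<lambda>i. c * A v i))"

definition hom_sv :: "nat \<Rightarrow> (real fps \<Rightarrow> (nat \<Rightarrow> real fps)) \<Rightarrow> bool" where
  "hom_sv n B \<longleftrightarrow>
     (\<forall>s. B s \<in> svec n) \<and>
     (\<forall>s t. B (s + t) = (\<lambda>i. B s i + B t i)) \<and>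
     (\<forall>c s. B (c * s) = (\<lambda>i. c * B s i))"

definition hom_vs :: "nat \<Rightarrow> ((nat \<Rightarrow> real fps) \<Rightarrow> real fps) \<Rightarrow> bool" where
  "hom_vs m C \<longleftrightarrow>
     (\<forall>u\<in>svec m. \<forall>v\<in>svec m. C (\<lambda>i. u i + v i) = C u + C v) \<and>
     (\<forall>c. \<forall>v\<in>svec m. C (\<lambda>i. c * v i) = c * C v)"

definition fps_ideal :: "real fps set \<Rightarrow> bool" where
  "fps_ideal I \<longleftrightarrow> 0 \<in> I \<and> (\<forall>a\<in>I. \<forall>b\<in>I. a + b \<in> I) \<and> (\<forall>r. \<forall>a\<in>I. r * a \<in> I)"

definition Fmap :: "((nat \<Rightarrow> real fps) \<Rightarrow> (nat \<Rightarrow> real fps)) \<Rightarrow> (real fps \<Rightarrow> (nat \<Rightarrow> real fps))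
    \<Rightarrow> ((nat \<Rightarrow> real fps) \<Rightarrow> real fps) \<Rightarrow> real fps
    \<Rightarrow> (nat \<Rightarrow> real fps) \<Rightarrow> real fps \<Rightarrow> (nat \<Rightarrow> real fps) \<times> real fps" where
  "Fmap A B C d \<alpha> \<sigma> = ((\<lambda>i. A \<alpha> i + B \<sigma> i), C \<alpha> + \<sigma> * d)"

end

theory Submission
  imports Defs
begin

text \<open>Since \<open>d\<close> has no constant term, \<open>1 - d\<close> is a unit of \<open>\<real>[[x]]\<close>. Hence the
  second component of \<open>F(\<alpha>, \<sigma>') = (\<beta>', \<sigma>')\<close>, namely \<open>\<sigma>' (1 - d) = C(\<alpha>)\<close>, determines
  \<open>\<sigma>'\<close>, and the first component then determines \<open>\<beta>'\<close>. Subtracting the equation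
  \<open>\<tau> = C(\<alpha>) + \<sigma> d\<close> gives \<open>(\<sigma>' - \<sigma>)(1 - d) = \<tau> - \<sigma> \<in> I\<close>, and multiplying by the
  inverse of \<open>1 - d\<close> puts \<open>\<sigma>' - \<sigma>\<close> into \<open>I\<close>.\<close>

lemma fps_inverse_one_minus_mult:
  fixes d :: "'a::field fps"
  assumes "fps_nth d 0 = 0"
  shows "inverse (1 - d) * (1 - d) = 1"
  using assms by (simp add: inverse_mult_eq_1)

lemma fps_affine_fixpoint_iff:
  fixes c d s :: "'a::field fps"
  assumes "fps_nth d 0 = 0"
  shows "s = c + s * d \<longleftrightarrow> s = inverse (1 - d) * c"
proof -
  have inv: "inverse (1 - d) * (1 - d) = 1"
    using assms by (rule fps_inverse_one_minus_mult)
  have "s = c + s * d \<longleftrightarrow> s * (1 - d) = c"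
    by (auto simp: right_diff_distrib diff_eq_eq)
  also have "\<dots> \<longleftrightarrow> s = inverse (1 - d) * c"
  proof
    assume "s * (1 - d) = c"
    then show "s = inverse (1 - d) * c"
      using inv by (metis mult.left_commute mult_1_right)
  next
    assume "s = inverse (1 - d) * c"
    then show "s * (1 - d) = c"
      using inv by (metis mult.assoc mult.commute mult_1_right)
  qed
  finally show ?thesis .
qed

lemma fps_ideal_uminus:
  assumes "fps_ideal I" and "a \<in> I"
  shows "- a \<in> I"
  using assms unfolding fps_ideal_def by (metis mult_minus1)

lemma fps_ideal_cancel_unit:
  assumes "fps_ideal I" and "a * e \<in> I" and "fps_nth e 0 \<noteq> 0"
  shows "a \<in> I"
proof -
  have "inverse e * (a * e) \<in> I"
    using assms(1,2) unfolding fps_ideal_def by blast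
  moreover have "inverse e * (a * e) = a"
    using assms(3) by (simp add: inverse_mult_eq_1 mult.left_commute)
  ultimately show ?thesis by simp
qed

lemma fps_affine_fixpoint_congruent:
  assumes "fps_ideal I" and "fps_nth d 0 = 0"
    and "s' = c + s' * d" and "\<tau> = c + \<sigma> * d" and "\<sigma> - \<tau> \<in> I"
  shows "s' - \<sigma> \<in> I"
proof (rule fps_ideal_cancel_unit[OF assms(1)])
  have "(s' - \<sigma>) * (1 - d) = - (\<sigma> - \<tau>)"
    using assms(3,4) by (simp add: algebra_simps)
  then show "(s' - \<sigma>) * (1 - d) \<in> I"
    using fps_ideal_uminus[OF assms(1,5)] by simp
  show "fps_nth (1 - d) 0 \<noteq> 0"
    using assms(2) by simp
qed

lemma svec_add:
  assumes "u \<in> svec n" and "v \<in> svec n"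
  shows "(\<lambda>i. u i + v i) \<in> svec n"
  using assms unfolding svec_def by simp

lemma Fmap_fixpoint_iff:
  "Fmap A B C d \<alpha> s = (b, s) \<longleftrightarrow> b = (\<lambda>i. A \<alpha> i + B s i) \<and> s = C \<alpha> + s * d"
  unfolding Fmap_def by auto

theorem lemma5p2:
  fixes m n :: nat
    and A :: "(nat \<Rightarrow> real fps) \<Rightarrow> (nat \<Rightarrow> real fps)"
    and B :: "real fps \<Rightarrow> (nat \<Rightarrow> real fps)"
    and C :: "(nat \<Rightarrow> real fps) \<Rightarrow> real fps"
    and d :: "real fps" and I :: "real fps set"
    and \<alpha> \<beta> :: "nat \<Rightarrow> real fps" and \<sigma> \<tau> :: "real fps"
  assumes "hom_vv m n A" and "hom_sv n B" and "hom_vs m C"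
    and "\<exists>f. d = fps_X * f"
    and "fps_ideal I"
    and "\<alpha> \<in> svec m" and "\<beta> \<in> svec n"
    and "Fmap A B C d \<alpha> \<sigma> = (\<beta>, \<tau>)"
    and "\<sigma> - \<tau> \<in> I"
  shows "(\<exists>!p. fst p \<in> svec n \<and> Fmap A B C d \<alpha> (snd p) = (fst p, snd p)) \<and>
         (\<forall>\<beta>' \<sigma>'. \<beta>' \<in> svec n \<and> Fmap A B C d \<alpha> \<sigma>' = (\<beta>', \<sigma>') \<longrightarrow> \<sigma>' - \<sigma> \<in> I)"
proof -
  have d0: "fps_nth d 0 = 0"
    using assms(4) by auto
  define s' where "s' = inverse (1 - d) * C \<alpha>"
  define b' where "b' = (\<lambda>i. A \<alpha> i + B s' i)"
  have fix_iff: "Fmap A B C d \<alpha> s = (b, s) \<longleftrightarrow> (b, s) = (b', s')" for b s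
    unfolding Fmap_fixpoint_iff fps_affine_fixpoint_iff[OF d0] b'_def s'_def by auto
  have "b' \<in> svec n"
    unfolding b'_def using assms(1,2,6) by (intro svec_add) (auto simp: hom_vv_def hom_sv_def)
  then have "\<exists>!p. fst p \<in> svec n \<and> Fmap A B C d \<alpha> (snd p) = (fst p, snd p)"
    using fix_iff by (intro ex1I[of _ "(b', s')"]) auto
  moreover have "\<sigma>' - \<sigma> \<in> I" if "Fmap A B C d \<alpha> \<sigma>' = (\<beta>', \<sigma>')" for \<beta>' \<sigma>'
    using that assms(8) unfolding Fmap_fixpoint_iff
    by (intro fps_affine_fixpoint_congruent[OF assms(5) d0 _ _ assms(9)]) (auto simp: Fmap_def)
  ultimately show ?thesis by blast
qed

end
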